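(* Let $F$ be the elementary cellular automaton with rule number 156. For every nonempty finite word $u\in\{0,1\}^*$, the deterministic communication complexity of $\textsc{SInv}_{F,u}$ restricted to inputs of length $n$ is bounded by a constant independent of $n$.
   Context: An elementary cellular automaton (ECA) with rule number $N\in\{0,\dots,255\}$ is the map $F:\{0,1\}^{\mathbb Z}\to\{0,1\}^{\mathbb Z}$ given by $F(x)_i=f(x_{i-1},x_i,x_{i+1})$. Here the local rule $f:\{0,1\}^3\to\{0,1\}$ is determined by $N=\sum_{a,b,c\in\{0,1\}}2^{4a+2b+c}f(a,b,c)$. For a nonempty finite word $u$, $p_u\in\{0,1\}^{\mathbb Z}$ is defined by $(p_u)_i=u_{i\bmod |u|}$. For a finite word $x$, $p_u[x]$ is the configuration equal to $x$ on positions $0,\dots,|x|-1$ and to $p_u$ elsewhere. $\textsc{SInv}_{F,u}$ is the decision problem: on input a finite word $x$, decide whether there is an integer $w$ such that for all $t\ge0$ the set of positions where $F^t(p_u)$ and $F^t(p_u[x])$ differ is contained in an interval of length $w$. For each $n$, it is regarded as a function $\{0,1\}^n\to\{0,1\}$. For a function $g:X\times Y\to Z$, $D(g)$ is the minimal depth of a deterministic two-party protocol computing $g$. In such a protocol, Alice knows $x$ and Bob knows $y$. The protocol is a binary tree: each internal node is labelled by a function of Alice's input only or of Bob's input only, with values in $\{\text{left},\text{right}\}$, and each leaf is labelled by an output value. For $g:\{0,1\}^m\to Z$, set $D(g)=\max_{0\le i<m}D(g_i)$, where $g_i:\{0,1\}^i\times\{0,1\}^{m-i}\to Z$ is $g_i(x,y)=g(xy)$.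 *)

theory Defs
  imports Main
begin

(* Configurations of {0,1}^Z are functions int => bool (True = 1); words are bool lists. *)
type_synonym config = "int \<Rightarrow> bool"

definition b2n :: "bool \<Rightarrow> nat" where "b2n b = (if b then 1 else 0)"

definition local_rule :: "nat \<Rightarrow> bool \<Rightarrow> bool \<Rightarrow> bool \<Rightarrow> bool" where
  "local_rule N a b c = bit N (4 * b2n a + 2 * b2n b + b2n c)"

definition eca :: "nat \<Rightarrow> config \<Rightarrow> config" where
  "eca N x = (\<lambda>i. local_rule N (x (i - 1)) (x i) (x (i + 1)))"

definition periodic :: "bool list \<Rightarrow> config" where
  "periodic u = (\<lambda>i. u ! nat (i mod int (length u)))"

definition patch :: "bool list \<Rightarrow> bool list \<Rightarrow> config" where
  "patch u x = (\<lambda>i. if 0 \<le> i \<and> i < int (length x) then x ! nat i else periodic u i)"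

definition diff_set :: "config \<Rightarrow> config \<Rightarrow> int set" where
  "diff_set c d = {i. c i \<noteq> d i}"

definition SInv :: "nat \<Rightarrow> bool list \<Rightarrow> bool list \<Rightarrow> bool" where
  "SInv N u x = (\<exists>w::int. \<forall>t::nat. \<exists>a::int.
      diff_set ((eca N ^^ t) (periodic u)) ((eca N ^^ t) (patch u x)) \<subseteq> {a..<a + w})"

(* deterministic two-party protocol trees; False = left, True = right *)
datatype ('a, 'b, 'z) protocol =
    Leaf 'z
  | AliceNode "'a \<Rightarrow> bool" "('a, 'b, 'z) protocol" "('a, 'b, 'z) protocol"
  | BobNode "'b \<Rightarrow> bool" "('a, 'b, 'z) protocol" "('a, 'b, 'z) protocol"

fun run :: "('a, 'b, 'z) protocol \<Rightarrow> 'a \<Rightarrow> 'b \<Rightarrow> 'z" where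
  "run (Leaf z) x y = z"
| "run (AliceNode f l r) x y = (if f x then run r x y else run l x y)"
| "run (BobNode f l r) x y = (if f y then run r x y else run l x y)"

fun depth :: "('a, 'b, 'z) protocol \<Rightarrow> nat" where
  "depth (Leaf z) = 0"
| "depth (AliceNode f l r) = Suc (max (depth l) (depth r))"
| "depth (BobNode f l r) = Suc (max (depth l) (depth r))"

definition D_split :: "nat \<Rightarrow> nat \<Rightarrow> (bool list \<Rightarrow> 'z) \<Rightarrow> nat" where
  "D_split i m g = (LEAST d. \<exists>P :: (bool list, bool list, 'z) protocol. depth P = d \<and>
      (\<forall>x y. length x = i \<longrightarrow> length y = m - i \<longrightarrow> run P x y = g (x @ y)))"

(* D(g) = max_{0 <= i < m} D(g_i)   (0 when m = 0) *)
definition D_word :: "nat \<Rightarrow> (bool list \<Rightarrow> 'z) \<Rightarrow> nat" where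
  "D_word m g = Sup ((\<lambda>i. D_split i m g) ` {..<m})"

end

theory Submission
  imports Defs
begin

(* Rule 156 acts by  F(c)_i = c_i XOR (c_{i-1} AND NOT c_{i+1}).  Call a position j with
   c_j = 0, c_{j+1} = 1 a wall.  The proof rests on three dynamical facts:
   (1) walls never move, and no information crosses a wall: two configurations that agree
       outside the region strictly between two walls of one of them agree there forever;
   (2) on the background 0^Z the rightmost 1 travels right at speed one;
   (3) F commutes with the mirror-complement symmetry  c_i |-> NOT c_{-i}.
   If p_u contains both letters, it has walls with period |u| on both sides of any patch x,
   so by (1) SInv(x) always holds.  If p_u is constant b, then SInv(x) holds iff x is
   constant b: for b = 0 a nonzero patch contains a wall that stays at distance at most
   the initial one from the front of (2), which moves away at speed one; the case b = 1
   is reduced to b = 0 by (3).  In both cases SInv(xy) is a Boolean function of one bit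
   computed by Alice and one bit computed by Bob, so a protocol of depth 2 suffices for
   every input length and every cut. *)

lemma eca156: "eca 156 c i = (c i \<noteq> (c (i - 1) \<and> \<not> c (i + 1)))"
  unfolding eca_def local_rule_def b2n_def
  by (cases "c (i - 1)"; cases "c i"; cases "c (i + 1)"; simp add: bit_nat_def)

abbreviation F :: "config \<Rightarrow> config" where
  "F \<equiv> eca 156"

lemma iter_const: "(F ^^ t) (\<lambda>_. b) = (\<lambda>_. b)"
  by (induction t) (auto simp: eca156)

section \<open>Walls\<close>

definition wall :: "config \<Rightarrow> int \<Rightarrow> bool" where
  "wall c j \<longleftrightarrow> \<not> c j \<and> c (j + 1)"

lemma wall_step: "wall c j \<Longrightarrow> wall (F c) j"
  by (simp add: wall_def eca156)

lemma wall_iter: "wall c j \<Longrightarrow> wall ((F ^^ t) c) j"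
  by (induction t) (simp_all add: wall_step)

lemma wall_between:
  assumes "\<not> c a" "c b" "a < b"
  shows "\<exists>j. a \<le> j \<and> j < b \<and> wall c j"
proof -
  define Z where "Z = {i. a \<le> i \<and> i < b \<and> \<not> c i}"
  have "finite Z" by (rule finite_subset[of _ "{a..<b}"]) (auto simp: Z_def)
  have "a \<in> Z" using assms unfolding Z_def by auto
  define j where "j = Max Z"
  have "j \<in> Z" using \<open>finite Z\<close> \<open>a \<in> Z\<close> unfolding j_def by (auto intro: Max_in)
  moreover have "c (j + 1)"
  proof (cases "j + 1 = b")
    case False
    have "j + 1 \<notin> Z" using Max_ge[OF \<open>finite Z\<close>, of "j + 1"] unfolding j_def by linarith
    with \<open>j \<in> Z\<close> False show ?thesis unfolding Z_def by auto
  qed (use assms in simp)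
  ultimately show ?thesis unfolding Z_def wall_def by auto
qed

lemma agree_outside_walls_step:
  assumes "wall c j1" "wall c j2"
    and "\<forall>i. i \<le> j1 + 1 \<or> j2 \<le> i \<longrightarrow> c i = d i"
  shows "\<forall>i. i \<le> j1 + 1 \<or> j2 \<le> i \<longrightarrow> F c i = F d i"
proof (intro allI impI)
  fix i assume "i \<le> j1 + 1 \<or> j2 \<le> i"
  then consider "i \<le> j1" | "i = j1 + 1" | "i = j2" | "j2 + 1 \<le> i" by linarith
  then show "F c i = F d i"
  proof cases
    case 1 then show ?thesis using assms(3) by (simp add: eca156)
  next
    case 2 then show ?thesis using assms by (simp add: eca156 wall_def)
  next
    case 3 then show ?thesis using assms by (simp add: eca156 wall_def)
  next
    case 4 then show ?thesis using assms(3) by (simp add: eca156)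
  qed
qed

lemma confined_between_walls:
  assumes "wall c j1" "wall c j2"
    and "\<forall>i. i \<le> j1 + 1 \<or> j2 \<le> i \<longrightarrow> c i = d i"
  shows "diff_set ((F ^^ t) c) ((F ^^ t) d) \<subseteq> {j1 + 2..<j2}"
proof -
  have "\<forall>i. i \<le> j1 + 1 \<or> j2 \<le> i \<longrightarrow> (F ^^ t) c i = (F ^^ t) d i"
  proof (induction t)
    case (Suc t)
    with agree_outside_walls_step[OF wall_iter[OF assms(1)] wall_iter[OF assms(2)]]
    show ?case by simp
  qed (use assms(3) in simp)
  then show ?thesis unfolding diff_set_def by fastforce
qed

section \<open>Fronts on the zero background\<close>

lemma front_step:
  assumes "c r" "\<forall>i > r. \<not> c i"
  shows "F c (r + 1) \<and> (\<forall>i > r + 1. \<not> F c i)"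
  using assms by (auto simp: eca156)

lemma front_iter:
  assumes "c r" "\<forall>i > r. \<not> c i"
  shows "(F ^^ t) c (r + int t)"
proof -
  have "(F ^^ t) c (r + int t) \<and> (\<forall>i > r + int t. \<not> (F ^^ t) c i)"
  proof (induction t)
    case (Suc t)
    from front_step[OF Suc[THEN conjunct1] Suc[THEN conjunct2]] show ?case
      by (simp add: algebra_simps)
  qed (use assms in simp)
  then show ?thesis ..
qed

definition bounded_spread :: "config \<Rightarrow> config \<Rightarrow> bool" where
  "bounded_spread c d \<longleftrightarrow>
     (\<exists>w. \<forall>t. \<exists>a. diff_set ((F ^^ t) c) ((F ^^ t) d) \<subseteq> {a..<a + w})"

lemma SInv_156_iff: "SInv 156 u x \<longleftrightarrow> bounded_spread (periodic u) (patch u x)"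
  unfolding SInv_def bounded_spread_def ..

(* A finite nonzero perturbation of 0^Z spreads without bound: the wall left of its
   rightmost 1 stays put while the front moves away. *)
lemma zero_background_spreads:
  assumes "finite {i. c i}" "c \<noteq> (\<lambda>_. False)"
  shows "\<not> bounded_spread (\<lambda>_. False) c"
proof
  assume "bounded_spread (\<lambda>_. False) c"
  then obtain w where w: "\<And>t. \<exists>a. diff_set ((F ^^ t) (\<lambda>_. False)) ((F ^^ t) c) \<subseteq> {a..<a + w}"
    unfolding bounded_spread_def by blast
  define S where "S = {i. c i}"
  have "S \<noteq> {}" using assms(2) unfolding S_def by auto
  define l where "l = Min S"
  define r where "r = Max S"
  have "finite S" using assms(1) unfolding S_def .
  have cr: "c r" using Max_in[OF \<open>finite S\<close> \<open>S \<noteq> {}\<close>] unfolding S_def r_def by simp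
  have beyond: "\<forall>i > r. \<not> c i"
    using Max_ge[OF \<open>finite S\<close>] unfolding S_def r_def by force
  have "c l" using Min_in[OF \<open>finite S\<close> \<open>S \<noteq> {}\<close>] unfolding S_def l_def by simp
  moreover have "\<not> c (l - 1)" using Min_le[OF \<open>finite S\<close>, of "l - 1"] unfolding S_def l_def by force
  ultimately have "l \<le> r" using beyond by force
  then obtain j where j: "j < r" "wall c j"
    using wall_between[of c "l - 1" r] cr \<open>\<not> c (l - 1)\<close> by auto
  define t where "t = nat w"
  obtain a where a: "diff_set ((F ^^ t) (\<lambda>_. False)) ((F ^^ t) c) \<subseteq> {a..<a + w}"
    using w by blast
  have "j + 1 \<in> {a..<a + w}" "r + int t \<in> {a..<a + w}"
    using a wall_iter[OF j(2), of t] front_iter[OF cr beyond, of t]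
    unfolding diff_set_def iter_const wall_def by auto
  then show False using j(1) unfolding t_def by auto
qed

section \<open>The mirror-complement symmetry\<close>

definition mirror :: "config \<Rightarrow> config" where
  "mirror c = (\<lambda>i. \<not> c (- i))"

lemma F_mirror: "F (mirror c) = mirror (F c)"
  by (rule ext) (auto simp: eca156 mirror_def algebra_simps)

lemma iter_mirror: "(F ^^ t) (mirror c) = mirror ((F ^^ t) c)"
  by (induction t) (simp_all add: F_mirror)

lemma bounded_spread_mirror:
  assumes "bounded_spread c d"
  shows "bounded_spread (mirror c) (mirror d)"
proof -
  obtain w where w: "\<And>t. \<exists>a. diff_set ((F ^^ t) c) ((F ^^ t) d) \<subseteq> {a..<a + w}"
    using assms unfolding bounded_spread_def by blast
  have "\<exists>a. diff_set ((F ^^ t) (mirror c)) ((F ^^ t) (mirror d)) \<subseteq> {a..<a + w}" for t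
  proof -
    obtain a where "diff_set ((F ^^ t) c) ((F ^^ t) d) \<subseteq> {a..<a + w}" using w by blast
    then have "diff_set ((F ^^ t) (mirror c)) ((F ^^ t) (mirror d)) \<subseteq> {1 - a - w..<1 - a}"
      unfolding iter_mirror unfolding diff_set_def mirror_def by fastforce
    then show ?thesis by (intro exI[of _ "1 - a - w"]) simp
  qed
  then show ?thesis unfolding bounded_spread_def by blast
qed

lemma constant_background:
  assumes "finite {i. c i \<noteq> b}"
  shows "bounded_spread (\<lambda>_. b) c \<longleftrightarrow> c = (\<lambda>_. b)"
proof
  assume spread: "bounded_spread (\<lambda>_. b) c"
  show "c = (\<lambda>_. b)"
  proof (cases b)
    case False
    with assms spread zero_background_spreads show ?thesis by auto
  next
    case True
    have "mirror (\<lambda>_. b) = (\<lambda>_. False)" using True by (simp add: mirror_def)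
    with bounded_spread_mirror[OF spread]
    have mirrored: "bounded_spread (\<lambda>_. False) (mirror c)" by simp
    have "{i. mirror c i} = uminus -` {i. c i \<noteq> b}"
      using True by (auto simp: mirror_def)
    moreover have "finite (uminus -` {i. c i \<noteq> b})"
      by (rule finite_vimageI[OF assms]) (simp add: inj_def)
    ultimately have "finite {i. mirror c i}" by simp
    with mirrored have "mirror c = (\<lambda>_. False)" using zero_background_spreads by blast
    then show ?thesis using True by (auto simp: mirror_def fun_eq_iff dest: spec[of _ "- _"])
  qed
qed (simp add: bounded_spread_def diff_set_def)

lemma periodic_shift: "u \<noteq> [] \<Longrightarrow> periodic u (i + int (length u) * q) = periodic u i"
  unfolding periodic_def by simp

lemma periodic_nth: "k < length u \<Longrightarrow> periodic u (int k) = u ! k"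
  unfolding periodic_def by simp

lemma periodic_in_set: "u \<noteq> [] \<Longrightarrow> periodic u i \<in> set u"
  unfolding periodic_def by (rule nth_mem) (simp add: nat_less_iff)

lemma patch_outside: "i < 0 \<or> int (length x) \<le> i \<Longrightarrow> patch u x i = periodic u i"
  unfolding patch_def by auto

lemma translate_beyond:
  fixes n j m :: int
  assumes "n > 0"
  shows "\<exists>q. j + n * q \<le> m" "\<exists>q. m \<le> j + n * q"
proof -
  have "\<bar>m - j\<bar> \<le> n * \<bar>m - j\<bar>" using assms by (simp add: mult_le_cancel_right1)
  then show "\<exists>q. j + n * q \<le> m" "\<exists>q. m \<le> j + n * q"
    by (intro exI[of _ "- \<bar>m - j\<bar>"], simp, intro exI[of _ "\<bar>m - j\<bar>"], simp)
qed

(* If u contains both letters, p_u has walls far to the left and right of every patch. *)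
lemma mixed_background_invariant:
  assumes "True \<in> set u" "False \<in> set u"
  shows "SInv 156 u x"
proof -
  let ?p = "periodic u" and ?n = "int (length u)"
  have "u \<noteq> []" "?n > 0" using assms(1) by auto
  obtain k0 k1 where "k0 < length u" "\<not> u ! k0" "k1 < length u" "u ! k1"
    using assms by (metis in_set_conv_nth)
  then have "\<not> ?p (int k0)" "?p (int k1 + ?n)"
    using periodic_nth periodic_shift[OF \<open>u \<noteq> []\<close>, of "int k1" 1] by auto
  with \<open>k0 < length u\<close> obtain j where "wall ?p j"
    using wall_between[of ?p "int k0" "int k1 + ?n"] by auto
  then have walls: "wall ?p (j + ?n * q)" for q
    using periodic_shift[OF \<open>u \<noteq> []\<close>, of j q] periodic_shift[OF \<open>u \<noteq> []\<close>, of "j + 1" q]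
    by (simp add: wall_def algebra_simps)
  obtain q1 q2 where "j + ?n * q1 \<le> -2" "int (length x) \<le> j + ?n * q2"
    using translate_beyond[OF \<open>?n > 0\<close>] by metis
  then obtain j1 j2 where "wall ?p j1" "wall ?p j2" "j1 \<le> -2" "int (length x) \<le> j2"
    using walls by blast
  then have "\<forall>i. i \<le> j1 + 1 \<or> j2 \<le> i \<longrightarrow> ?p i = patch u x i"
    using patch_outside by fastforce
  from confined_between_walls[OF \<open>wall ?p j1\<close> \<open>wall ?p j2\<close> this]
  have "diff_set ((F ^^ t) ?p) ((F ^^ t) (patch u x)) \<subseteq> {j1 + 2..<(j1 + 2) + (j2 - j1 - 2)}"
    for t by simp
  then show ?thesis unfolding SInv_156_iff bounded_spread_def by blast
qed

lemma constant_background_invariant: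
  assumes "u \<noteq> []" "set u \<subseteq> {b}"
  shows "SInv 156 u x \<longleftrightarrow> set x \<subseteq> {b}"
proof -
  have p: "periodic u = (\<lambda>_. b)" using periodic_in_set[OF assms(1)] assms(2) by auto
  have "{i. patch u x i \<noteq> b} \<subseteq> {0..<int (length x)}"
    using patch_outside p by fastforce
  then have "finite {i. patch u x i \<noteq> b}" by (rule finite_subset) simp
  moreover have "patch u x = (\<lambda>_. b) \<longleftrightarrow> set x \<subseteq> {b}"
  proof
    assume "patch u x = (\<lambda>_. b)"
    then have "x ! k = b" if "k < length x" for k
      using that fun_cong[of "patch u x" "\<lambda>_. b" "int k"] unfolding patch_def by simp
    then show "set x \<subseteq> {b}" by (auto simp: in_set_conv_nth)
  next
    assume "set x \<subseteq> {b}"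
    have "x ! nat i = b" if "0 \<le> i" "i < int (length x)" for i
    proof -
      have "nat i < length x" using that by linarith
      then show ?thesis using \<open>set x \<subseteq> {b}\<close> nth_mem by blast
    qed
    then show "patch u x = (\<lambda>_. b)" unfolding patch_def p by auto
  qed
  ultimately show ?thesis unfolding SInv_156_iff p using constant_background by simp
qed

section \<open>Communication complexity\<close>

lemma D_word_le_2:
  fixes A B :: "bool list \<Rightarrow> bool" and h :: "bool \<Rightarrow> bool \<Rightarrow> 'z" and g :: "bool list \<Rightarrow> 'z"
  assumes "\<And>x y. g (x @ y) = h (A x) (B y)"
  shows "D_word n g \<le> 2"
proof -
  define P where "P = AliceNode A (BobNode B (Leaf (h False False)) (Leaf (h False True)))
                         (BobNode B (Leaf (h True False)) (Leaf (h True True)))"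
  have "depth P = 2" "\<And>x y. run P x y = g (x @ y)" unfolding P_def using assms by simp_all
  then have "D_split i n g \<le> 2" for i
    unfolding D_split_def by (intro Least_le) blast
  then show ?thesis unfolding D_word_def
    by (cases "n = 0") (auto intro!: cSup_least)
qed

theorem mainTheorem11:
  fixes u :: "bool list"
  assumes "u \<noteq> []"
  shows "\<exists>C::nat. \<forall>n::nat. D_word n (SInv 156 u) \<le> C"
proof (intro exI allI)
  fix n
  consider "True \<in> set u" "False \<in> set u" | b where "set u \<subseteq> {b}"
    by (metis (full_types) subsetI singleton_iff)
  then show "D_word n (SInv 156 u) \<le> 2"
  proof cases
    case 1
    then show ?thesis
      using mixed_background_invariant by (intro D_word_le_2[where h = "\<lambda>_ _. True"]) auto
  next
    case (2 b)
    then show ?thesis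
      using constant_background_invariant[OF assms]
      by (intro D_word_le_2[where h = "(\<and>)" and A = "\<lambda>x. set x \<subseteq> {b}"]) auto
  qed
qed

end
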